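(* Let $\mathcal{L}\subset\mathbb{S}^n$ be a regular linear subspace. The following two conditions are equivalent: (a) there exists a non-zero $K\in\mathcal{L}$ such that $\mathcal{L}\subseteq(\{K\}^\perp)^{-1}$; (b) there exists a non-zero $K\in\mathcal{L}$ such that $\det(P+tK)=\det(P)$ for all $P\in\mathcal{L}$ and all $t\in\mathbb{C}$.
   Context: $\mathbb{S}^n$ denotes the space of complex symmetric $n\times n$ matrices. A linear subspace $\mathcal{L}$ is regular if it contains a full-rank matrix. For a linear subspace $\mathcal{M}\subseteq\mathbb{S}^n$, $\mathcal{M}^{-1}$ denotes its reciprocal variety, the Zariski closure of the set of inverses of invertible matrices in $\mathcal{M}$. $\{K\}^\perp=\{\Sigma\in\mathbb{S}^n:\mathrm{tr}(K\Sigma)=0\}$. *)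

theory Defs
  imports "HOL-Analysis.Analysis"
begin

definition cmat_scale :: "complex \<Rightarrow> complex^'n^'n \<Rightarrow> complex^'n^'n" where
  "cmat_scale c A = (\<chi> i j. c * A $ i $ j)"

definition sym_matrices :: "(complex^'n^'n) set" where
  "sym_matrices = {A. transpose A = A}"

definition sym_linear_subspace :: "(complex^'n^'n) set \<Rightarrow> bool" where
  "sym_linear_subspace L \<longleftrightarrow> L \<subseteq> sym_matrices \<and> 0 \<in> L \<and>
     (\<forall>A\<in>L. \<forall>B\<in>L. A + B \<in> L) \<and> (\<forall>c. \<forall>A\<in>L. cmat_scale c A \<in> L)"

definition regular_subspace :: "(complex^'n^'n) set \<Rightarrow> bool" where
  "regular_subspace L \<longleftrightarrow> (\<exists>A\<in>L. invertible A)"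

inductive matpoly :: "(complex^'n^'n \<Rightarrow> complex) \<Rightarrow> bool" where
  mp_const: "matpoly (\<lambda>_. c)"
| mp_entry: "matpoly (\<lambda>A. A $ i $ j)"
| mp_add: "matpoly p \<Longrightarrow> matpoly q \<Longrightarrow> matpoly (\<lambda>A. p A + q A)"
| mp_mult: "matpoly p \<Longrightarrow> matpoly q \<Longrightarrow> matpoly (\<lambda>A. p A * q A)"

definition zariski_closure :: "(complex^'n^'n) set \<Rightarrow> (complex^'n^'n) set" where
  "zariski_closure S = {A. \<forall>p. matpoly p \<and> (\<forall>B\<in>S. p B = 0) \<longrightarrow> p A = 0}"

definition reciprocal_variety :: "(complex^'n^'n) set \<Rightarrow> (complex^'n^'n) set" where
  "reciprocal_variety M = zariski_closure {matrix_inv A | A. A \<in> M \<and> invertible A}"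

definition trace_perp :: "complex^'n^'n \<Rightarrow> (complex^'n^'n) set" where
  "trace_perp K = {S \<in> sym_matrices. trace (K ** S) = 0}"

end

theory Submission
  imports Defs "HOL-Computational_Algebra.Polynomial"
begin

text \<open>
  The derivative of \<open>t \<mapsto> det (P + t K)\<close> is the polynomial \<open>D\<^sub>K(P + t K)\<close>, where
  \<open>D\<^sub>K(A) = \<Sum>\<^sub>i det (A with row i replaced by row i of K)\<close>; on invertible \<open>A\<close> this is
  Jacobi's formula \<open>det A \<cdot> tr (K A\<^sup>-\<^sup>1)\<close>. Hence \<open>D\<^sub>K\<close> vanishes on the inverses of
  \<open>{K}\<^sup>\<bottom>\<close> and so on its Zariski closure, which gives (a) \<Longrightarrow> (b). Conversely, (b) makes
  \<open>D\<^sub>K\<close> vanish on \<open>\<L>\<close>, so every invertible \<open>P \<in> \<L>\<close> has \<open>P\<^sup>-\<^sup>1 \<in> {K}\<^sup>\<bottom>\<close>; and the invertible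
  matrices are Zariski dense in the regular subspace \<open>\<L>\<close>: on the line from an invertible
  \<open>A \<in> \<L>\<close> to any \<open>P \<in> \<L>\<close>, a polynomial vanishing wherever \<open>det \<noteq> 0\<close> vanishes identically.
\<close>

lemma matpoly_sum:
  "finite S \<Longrightarrow> (\<And>x. x \<in> S \<Longrightarrow> matpoly (f x)) \<Longrightarrow> matpoly (\<lambda>A. \<Sum>x\<in>S. f x A)"
  by (induction S rule: finite_induct) (simp_all add: mp_const mp_add)

lemma matpoly_prod:
  "finite S \<Longrightarrow> (\<And>x. x \<in> S \<Longrightarrow> matpoly (f x)) \<Longrightarrow> matpoly (\<lambda>A. \<Prod>x\<in>S. f x A)"
  by (induction S rule: finite_induct) (simp_all add: mp_const mp_mult)

lemma matpoly_det:
  fixes M :: "complex^'n^'n \<Rightarrow> complex^'n^'n"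
  assumes "\<And>i j. matpoly (\<lambda>A. M A $ i $ j)"
  shows "matpoly (\<lambda>A. det (M A))"
  unfolding det_def by (intro matpoly_sum matpoly_prod mp_mult mp_const assms) auto

lemma matpoly_along_line:
  assumes "matpoly q"
  shows "\<exists>r. \<forall>s. q (X + cmat_scale s Y) = poly r s"
  using assms
proof induction
  case (mp_const c)
  show ?case by (intro exI[of _ "[:c:]"]) simp
next
  case (mp_entry i j)
  show ?case by (intro exI[of _ "[:X$i$j, Y$i$j:]"]) (simp add: cmat_scale_def algebra_simps)
next
  case (mp_add p q)
  then show ?case by (metis poly_add)
next
  case (mp_mult p q)
  then show ?case by (metis poly_mult)
qed

lemma poly_eq_0_if_vanishes_off_roots:
  fixes p q :: "complex poly"
  assumes "q \<noteq> 0" and "\<And>x. poly q x \<noteq> 0 \<Longrightarrow> poly p x = 0"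
  shows "p = 0"
proof -
  have "\<forall>x. poly (p * q) x = 0" using assms(2) by auto
  then have "p * q = 0" by (simp only: poly_all_0_iff_0)
  then show ?thesis using assms(1) by simp
qed

lemma cmat_scale_0 [simp]: "cmat_scale 0 K = 0"
  by (simp add: cmat_scale_def vec_eq_iff)

lemma cmat_scale_1 [simp]: "cmat_scale 1 K = K"
  by (simp add: cmat_scale_def vec_eq_iff)

lemma sym_linear_subspace_add_scale:
  assumes "sym_linear_subspace L" "A \<in> L" "B \<in> L"
  shows "A + cmat_scale s B \<in> L"
  using assms unfolding sym_linear_subspace_def by blast

lemma sym_linear_subspace_affine_line:
  assumes "sym_linear_subspace L" "A \<in> L" "P \<in> L"
  shows "A + cmat_scale s (P - A) \<in> L"
proof -
  have "A + cmat_scale s (P - A) = cmat_scale (1 - s) A + cmat_scale s P"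
    by (simp add: cmat_scale_def vec_eq_iff algebra_simps)
  then show ?thesis using assms unfolding sym_linear_subspace_def by simp
qed

lemma matrix_inv_right:
  fixes A :: "'a::field^'n^'n"
  assumes "invertible A"
  shows "A ** matrix_inv A = mat 1"
    and matrix_inv_left: "matrix_inv A ** A = mat 1"
proof -
  have "\<exists>A'. A ** A' = mat 1 \<and> A' ** A = mat 1" using assms invertible_def by blast
  then have "A ** matrix_inv A = mat 1 \<and> matrix_inv A ** A = mat 1"
    unfolding matrix_inv_def by (rule someI_ex)
  then show "A ** matrix_inv A = mat 1" "matrix_inv A ** A = mat 1" by auto
qed

lemma matrix_inv_unique:
  fixes A B :: "'a::field^'n^'n"
  assumes "A ** B = mat 1" "B ** A = mat 1"
  shows "matrix_inv A = B"
proof -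
  have "invertible A" using assms invertible_def by blast
  have "matrix_inv A = matrix_inv A ** (A ** B)" using assms by simp
  also have "\<dots> = (matrix_inv A ** A) ** B" by (simp add: matrix_mul_assoc)
  also have "\<dots> = B" using matrix_inv_left[OF \<open>invertible A\<close>] by simp
  finally show ?thesis .
qed

lemma invertible_matrix_inv:
  fixes A :: "'a::field^'n^'n"
  assumes "invertible A"
  shows "invertible (matrix_inv A)"
    and matrix_inv_matrix_inv: "matrix_inv (matrix_inv A) = A"
  using matrix_inv_right[OF assms] matrix_inv_left[OF assms] invertible_def matrix_inv_unique
  by blast+

lemma transpose_matrix_inv:
  fixes A :: "'a::field^'n^'n"
  assumes "invertible A"
  shows "transpose (matrix_inv A) = matrix_inv (transpose A)"
  by (metis assms matrix_inv_left matrix_inv_right matrix_inv_unique matrix_transpose_mul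
      transpose_mat)

definition replace_row :: "complex^'n^'n \<Rightarrow> complex^'n^'n \<Rightarrow> 'n \<Rightarrow> complex^'n^'n" where
  "replace_row K A i = (\<chi> r c. if r = i then K$i$c else A$r$c)"

text \<open>The directional derivative of \<open>det\<close> at \<open>A\<close> in direction \<open>K\<close>, expanded by multilinearity
  in the rows so that it is visibly a polynomial in the entries of \<open>A\<close>.\<close>
definition det_deriv :: "complex^'n^'n \<Rightarrow> complex^'n^'n \<Rightarrow> complex" where
  "det_deriv K A = (\<Sum>i\<in>UNIV. det (replace_row K A i))"

lemma matpoly_det_deriv: "matpoly (det_deriv K)"
proof -
  have "matpoly (\<lambda>A. \<Sum>i\<in>UNIV. det (replace_row K A i))"
  proof (intro matpoly_sum matpoly_det)
    fix i r c
    show "matpoly (\<lambda>A. replace_row K A i $ r $ c)"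
      by (cases "r = i") (simp_all add: replace_row_def mp_const mp_entry)
  qed auto
  then show ?thesis unfolding det_deriv_def[abs_def] .
qed

lemma det_replace_row_invertible:
  assumes "invertible A"
  shows "det (replace_row K A i) = (K ** matrix_inv A)$i$i * det A"
proof -
  define x where "x = row i K v* matrix_inv A"
  have "(\<Sum>j\<in>UNIV. x$j *s row j A) = x v* A"
    by (simp add: vec_eq_iff vector_matrix_mult_def row_def sum_component mult.commute)
  also have "\<dots> = row i K"
    unfolding x_def by (simp add: vector_matrix_mul_assoc matrix_inv_left[OF assms])
  finally have "replace_row K A i = (\<chi> r. if r = i then (\<Sum>j\<in>UNIV. x$j *s row j A) else row r A)"
    by (simp add: replace_row_def vec_eq_iff row_def)
  then have "det (replace_row K A i) = x$i * det A"
    using cramer_lemma_transpose[of i x A] by simp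
  moreover have "x$i = (K ** matrix_inv A)$i$i"
    by (simp add: x_def vector_matrix_mult_def matrix_matrix_mult_def row_def mult.commute)
  ultimately show ?thesis by simp
qed

lemma det_deriv_invertible:
  assumes "invertible A"
  shows "det_deriv K A = det A * trace (K ** matrix_inv A)"
  unfolding det_deriv_def trace_def det_replace_row_invertible[OF assms]
  by (simp add: sum_distrib_left mult.commute)

lemma det_deriv_permutation_expansion:
  fixes K M :: "complex^'n::finite^'n"
  shows "det_deriv K M = (\<Sum>p | p permutes (UNIV::'n set).
     of_int (sign p) * (\<Sum>i\<in>UNIV. K$i$p i * (\<Prod>j\<in>UNIV-{i}. M$j$p j)))"
proof -
  have "det (replace_row K M i) = (\<Sum>p | p permutes (UNIV::'n set).
      of_int (sign p) * (K$i$p i * (\<Prod>j\<in>UNIV-{i}. M$j$p j)))" for i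
    unfolding det_def
  proof (intro sum.cong refl)
    fix p
    have "(\<Prod>j\<in>UNIV. replace_row K M i $ j $ p j)
        = replace_row K M i $ i $ p i * (\<Prod>j\<in>UNIV-{i}. replace_row K M i $ j $ p j)"
      by (simp add: prod.remove)
    also have "\<dots> = K$i$p i * (\<Prod>j\<in>UNIV-{i}. M$j$p j)"
      by (simp add: replace_row_def)
    finally show "of_int (sign p) * (\<Prod>j\<in>UNIV. replace_row K M i $ j $ p j)
        = of_int (sign p) * (K$i$p i * (\<Prod>j\<in>UNIV-{i}. M$j$p j))"
      by simp
  qed
  then show ?thesis
    unfolding det_deriv_def by (simp add: sum_distrib_left) (rule sum.swap)
qed

lemma has_field_derivative_det_line:
  fixes P K :: "complex^'n::finite^'n"
  shows "((\<lambda>t. det (P + cmat_scale t K)) has_field_derivative det_deriv K (P + cmat_scale t0 K)) (at t0)"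
proof -
  have "((\<lambda>t. \<Sum>p | p permutes (UNIV::'n set). of_int (sign p) * (\<Prod>i\<in>UNIV. P$i$p i + t * K$i$p i))
      has_field_derivative (\<Sum>p | p permutes (UNIV::'n set).
        of_int (sign p) * (\<Sum>i\<in>UNIV. K$i$p i * (\<Prod>j\<in>UNIV-{i}. P$j$p j + t0 * K$j$p j)))) (at t0)"
    by (intro DERIV_sum DERIV_cmult has_field_derivative_prod) (auto intro!: derivative_eq_intros)
  then show ?thesis
    by (simp add: det_def det_deriv_permutation_expansion cmat_scale_def)
qed

lemma det_line_const_if_det_deriv_vanishes:
  assumes "\<And>t. det_deriv K (P + cmat_scale t K) = 0"
  shows "det (P + cmat_scale t K) = det P"
proof -
  have "\<exists>c. \<forall>x\<in>UNIV. det (P + cmat_scale x K) = c"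
    using has_field_derivative_det_line[of P K] assms
    by (intro has_field_derivative_zero_constant) auto
  then show ?thesis by (metis UNIV_I add.right_neutral cmat_scale_0)
qed

lemma det_deriv_vanishes_if_det_line_const:
  assumes "\<And>t. det (P + cmat_scale t K) = det P"
  shows "det_deriv K P = 0"
proof -
  have "((\<lambda>t. det P) has_field_derivative det_deriv K P) (at 0)"
    using has_field_derivative_det_line[of P K 0] assms by simp
  then show ?thesis using DERIV_const DERIV_unique by blast
qed

lemma det_deriv_vanishes_on_reciprocal_variety:
  assumes "B \<in> reciprocal_variety (trace_perp K)"
  shows "det_deriv K B = 0"
proof -
  have "det_deriv K (matrix_inv S) = 0" if "S \<in> trace_perp K" "invertible S" for S
    using that det_deriv_invertible[OF invertible_matrix_inv(1)[OF \<open>invertible S\<close>]]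
    by (simp add: matrix_inv_matrix_inv trace_perp_def)
  then show ?thesis
    using assms matpoly_det_deriv unfolding reciprocal_variety_def zariski_closure_def by blast
qed

lemma inverse_of_trace_perp_if_det_deriv_vanishes:
  assumes "P \<in> sym_matrices" "invertible P" "det_deriv K P = 0"
  shows "P \<in> {matrix_inv A | A. A \<in> trace_perp K \<and> invertible A}"
proof -
  have "trace (K ** matrix_inv P) = 0"
    using assms det_deriv_invertible[OF assms(2)] invertible_det_nz by auto
  moreover have "transpose (matrix_inv P) = matrix_inv P"
    using assms(1) transpose_matrix_inv[OF assms(2)] by (simp add: sym_matrices_def)
  ultimately have "matrix_inv P \<in> trace_perp K" by (simp add: trace_perp_def sym_matrices_def)
  then show ?thesis
    using invertible_matrix_inv[OF assms(2)] by (metis (mono_tags, lifting) mem_Collect_eq)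
qed

lemma regular_subspace_subset_zariski_closure:
  assumes L: "sym_linear_subspace L" "regular_subspace L"
    and S: "{P \<in> L. invertible P} \<subseteq> S"
  shows "L \<subseteq> zariski_closure S"
proof
  fix P assume "P \<in> L"
  obtain A where "A \<in> L" "invertible A" using L(2) unfolding regular_subspace_def by blast
  have "q P = 0" if q: "matpoly q" "\<forall>B\<in>S. q B = 0" for q
  proof -
    obtain r where r: "\<And>s. q (A + cmat_scale s (P - A)) = poly r s"
      using matpoly_along_line[OF q(1)] by blast
    obtain r0 where r0: "\<And>s. det (A + cmat_scale s (P - A)) = poly r0 s"
      using matpoly_along_line[OF matpoly_det[of "\<lambda>B. B", OF mp_entry]] by blast
    have "r0 \<noteq> 0"
      using r0[of 0] \<open>invertible A\<close> invertible_det_nz by force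
    moreover have "poly r s = 0" if "poly r0 s \<noteq> 0" for s
    proof -
      have "A + cmat_scale s (P - A) \<in> S"
        using that r0 S sym_linear_subspace_affine_line[OF L(1) \<open>A \<in> L\<close> \<open>P \<in> L\<close>]
        by (auto simp: invertible_det_nz)
      then show ?thesis using q(2) r by metis
    qed
    ultimately have "r = 0" by (rule poly_eq_0_if_vanishes_off_roots)
    then show ?thesis using r[of 1] by simp
  qed
  then show "P \<in> zariski_closure S" unfolding zariski_closure_def by blast
qed

theorem lemma6p5:
  fixes L :: "(complex^'n^'n) set"
  assumes "sym_linear_subspace L" and "regular_subspace L"
  shows "(\<exists>K\<in>L. K \<noteq> 0 \<and> L \<subseteq> reciprocal_variety (trace_perp K)) \<longleftrightarrow>
         (\<exists>K\<in>L. K \<noteq> 0 \<and> (\<forall>P\<in>L. \<forall>t::complex. det (P + cmat_scale t K) = det P))"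
proof
  assume "\<exists>K\<in>L. K \<noteq> 0 \<and> L \<subseteq> reciprocal_variety (trace_perp K)"
  then obtain K where K: "K \<in> L" "K \<noteq> 0" "L \<subseteq> reciprocal_variety (trace_perp K)" by blast
  have "det (P + cmat_scale t K) = det P" if "P \<in> L" for P t
    using K(3) sym_linear_subspace_add_scale[OF assms(1) \<open>P \<in> L\<close> K(1)]
    by (blast intro: det_line_const_if_det_deriv_vanishes det_deriv_vanishes_on_reciprocal_variety)
  then show "\<exists>K\<in>L. K \<noteq> 0 \<and> (\<forall>P\<in>L. \<forall>t::complex. det (P + cmat_scale t K) = det P)"
    using K by blast
next
  assume "\<exists>K\<in>L. K \<noteq> 0 \<and> (\<forall>P\<in>L. \<forall>t::complex. det (P + cmat_scale t K) = det P)"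
  then obtain K where K: "K \<in> L" "K \<noteq> 0" "\<And>P t. P \<in> L \<Longrightarrow> det (P + cmat_scale t K) = det P"
    by blast
  have "L \<subseteq> sym_matrices" using assms(1) unfolding sym_linear_subspace_def by blast
  then have "P \<in> {matrix_inv A | A. A \<in> trace_perp K \<and> invertible A}"
    if "P \<in> L" "invertible P" for P
    using that K(3)
    by (intro inverse_of_trace_perp_if_det_deriv_vanishes det_deriv_vanishes_if_det_line_const) auto
  then have "{P \<in> L. invertible P} \<subseteq> {matrix_inv A | A. A \<in> trace_perp K \<and> invertible A}"
    by blast
  then have "L \<subseteq> reciprocal_variety (trace_perp K)"
    unfolding reciprocal_variety_def by (rule regular_subspace_subset_zariski_closure[OF assms])
  then show "\<exists>K\<in>L. K \<noteq> 0 \<and> L \<subseteq> reciprocal_variety (trace_perp K)" using K by blast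
qed

end
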